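(* Let $n\in\mathbb{N}$, $\boldsymbol{A}\in\mathbb{R}^{n\times n}$, $\boldsymbol{b}\in\mathbb{R}^n$ with $(\boldsymbol{A},\boldsymbol{b})$ controllable, and $g:\mathbb{R}^n\to\mathbb{R}$ with $g(\boldsymbol{0})\neq 0$. Let $\mathcal{X}=\bigcup_{i=1}^s\mathcal{X}_i\subset\mathbb{R}^n$ with $s\in\mathbb{N}$ and each $\mathcal{X}_i$ convex, such that for every $i$ either ($g(\boldsymbol{x})\ge 0$ for all $\boldsymbol{x}\in\mathcal{X}_i$ and $g$ is concave on $\mathcal{X}_i$) or ($g(\boldsymbol{x})\le 0$ for all $\boldsymbol{x}\in\mathcal{X}_i$ and $g$ is convex on $\mathcal{X}_i$); assume $\boldsymbol{0}\in\mathrm{int}(\mathcal{X}_1)$, and let $\mathcal{U}=[\underline{u},\overline{u}]$ with $\underline{u}<0<\overline{u}$. Let $\boldsymbol{c}\in\mathbb{R}^n$ satisfy $\boldsymbol{c}^\top\boldsymbol{A}^{i}\boldsymbol{b}=0$ for $i\in\{0,\dots,n-2\}$ and $\boldsymbol{c}^\top\boldsymbol{A}^{n-1}\boldsymbol{b}\neq0$, let $b_0\neq 0$, $a_0,\dots,a_{n-1}\in\mathbb{R}$, $\beta:=\boldsymbol{c}^\top\boldsymbol{A}^{n-1}\boldsymbol{b}$, $\boldsymbol{\alpha}^\top:=\boldsymbol{c}^\top(\boldsymbol{A}^n+\sum_{i=0}^{n-1}a_i\boldsymbol{A}^i)$. Let $\mathcal{X}^\circ:=\{\boldsymbol{x}\in\mathbb{R}^n\mid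 g(\boldsymbol{x})\neq0\}$, $\Psi(\boldsymbol{x},v):=\frac{b_0v-\boldsymbol{\alpha}^\top\boldsymbol{x}}{\beta g(\boldsymbol{x})}$ for $\boldsymbol{x}\in\mathcal{X}^\circ$, and $$\mathcal{Z}:=\Big\{(\boldsymbol{x},v)\in\mathbb{R}^{n+1}\,\Big|\,\boldsymbol{x}\in\mathcal{X}\cap\mathcal{X}^\circ,\ \Psi(\boldsymbol{x},v)\in\mathcal{U}\Big\}\cup\Big\{(\boldsymbol{x},v)\in\mathbb{R}^{n+1}\,\Big|\,\boldsymbol{x}\in\mathcal{X}\setminus\mathcal{X}^\circ,\ v=\tfrac{\boldsymbol{\alpha}^\top\boldsymbol{x}}{b_0}\Big\}.$$ For $i\in\{1,\dots,s\}$ define $\mathcal{U}_i(\boldsymbol{x}):=[\beta g(\boldsymbol{x})\underline{u},\beta g(\boldsymbol{x})\overline{u}]$ if $\beta g(\boldsymbol{x})\ge0$ for all $\boldsymbol{x}\in\mathcal{X}_i$, and $\mathcal{U}_i(\boldsymbol{x}):=[\beta g(\boldsymbol{x})\overline{u},\beta g(\boldsymbol{x})\underline{u}]$ otherwise, and $$\mathcal{Z}_i:=\Big\{(\boldsymbol{x},v)\in\mathbb{R}^{n+1}\,\Big|\,\boldsymbol{x}\in\mathcal{X}_i,\ b_0v-\boldsymbol{\alpha}^\top\boldsymbol{x}\in\mathcal{U}_i(\boldsymbol{x})\Big\}.$$ Then each $\mathcal{Z}_i$ is convex and $\mathcal{Z}=\bigcup_{i=1}^s\mathcal{Z}_i$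.
   Context: This arises from the discrete-time system $\boldsymbol{x}(k+1)=\boldsymbol{A}\boldsymbol{x}(k)+g(\boldsymbol{x}(k))\boldsymbol{b}\,u(k)$ with constraints $\boldsymbol{x}\in\mathcal{X}$, $u\in\mathcal{U}$; $\Psi$ is the exactly linearizing feedback $u=\Psi(\boldsymbol{x},v)$ with artificial input $v$. *)

theory Defs
  imports "HOL-Analysis.Analysis"
begin

definition mat_pow :: "real^'n^'n \<Rightarrow> nat \<Rightarrow> real^'n^'n" where
  "mat_pow A k = (((**) A) ^^ k) (mat 1)"

definition controllable :: "real^'n^'n \<Rightarrow> real^'n \<Rightarrow> bool" where
  "controllable A b \<longleftrightarrow> span {mat_pow A k *v b | k. k < CARD('n)} = UNIV"

definition alpha_vec :: "real^'n^'n \<Rightarrow> real^'n \<Rightarrow> (nat \<Rightarrow> real) \<Rightarrow> real^'n" where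
  "alpha_vec A c a = c v* (mat_pow A CARD('n) + (\<Sum>i<CARD('n). a i *\<^sub>R mat_pow A i))"

definition Psi :: "(real^'n \<Rightarrow> real) \<Rightarrow> real \<Rightarrow> real^'n \<Rightarrow> real \<Rightarrow> real^'n \<Rightarrow> real \<Rightarrow> real" where
  "Psi g \<beta> al b0 x v = (b0 * v - al \<bullet> x) / (\<beta> * g x)"

definition Xcirc :: "(real^'n \<Rightarrow> real) \<Rightarrow> (real^'n) set" where
  "Xcirc g = {x. g x \<noteq> 0}"

definition Zset :: "(real^'n) set \<Rightarrow> (real^'n \<Rightarrow> real) \<Rightarrow> real \<Rightarrow> real^'n \<Rightarrow> real
    \<Rightarrow> real set \<Rightarrow> ((real^'n) \<times> real) set" where
  "Zset X g \<beta> al b0 U =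
     {(x, v). x \<in> X \<inter> Xcirc g \<and> Psi g \<beta> al b0 x v \<in> U}
     \<union> {(x, v). x \<in> X - Xcirc g \<and> v = (al \<bullet> x) / b0}"

definition Ui :: "(real^'n) set \<Rightarrow> (real^'n \<Rightarrow> real) \<Rightarrow> real \<Rightarrow> real \<Rightarrow> real \<Rightarrow> real^'n \<Rightarrow> real set" where
  "Ui Xi g \<beta> ul uu x =
     (if \<forall>y\<in>Xi. \<beta> * g y \<ge> 0 then {\<beta> * g x * ul .. \<beta> * g x * uu}
      else {\<beta> * g x * uu .. \<beta> * g x * ul})"

definition Zi :: "(real^'n) set \<Rightarrow> (real^'n \<Rightarrow> real) \<Rightarrow> real \<Rightarrow> real^'n \<Rightarrow> real
    \<Rightarrow> real \<Rightarrow> real \<Rightarrow> ((real^'n) \<times> real) set" where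
  "Zi Xi g \<beta> al b0 ul uu = {(x, v). x \<in> Xi \<and> b0 * v - al \<bullet> x \<in> Ui Xi g \<beta> ul uu x}"

end

theory Submission
  imports Defs
begin

text \<open>Zi is the preimage of the region between the graphs of the bounds of Ui under the
  shear (x, v) \<mapsto> (x, b0 v - \<alpha> \<bullet> x); since \<beta> g has constant sign on each piece,
  one bound is convex and the other concave, so the region is convex.  Pointwise, for
  \<beta> g(x) \<noteq> 0 the constraint b0 v - \<alpha> \<bullet> x \<in> Ui(x) is the constraint \<Psi>(x, v) \<in> U multiplied
  by \<beta> g(x) (which flips the interval exactly when \<beta> g(x) < 0), while for g(x) = 0 it
  degenerates to b0 v = \<alpha> \<bullet> x.\<close>

definition sign_concave_on :: "'a::real_vector set \<Rightarrow> ('a \<Rightarrow> real) \<Rightarrow> bool" where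
  "sign_concave_on S g \<longleftrightarrow>
     ((\<forall>x\<in>S. 0 \<le> g x) \<and> concave_on S g) \<or> ((\<forall>x\<in>S. g x \<le> 0) \<and> convex_on S g)"

lemma convex_on_cmul_nonpos:
  fixes c :: real
  assumes "c \<le> 0" and "concave_on S f"
  shows "convex_on S (\<lambda>x. c * f x)"
  using assms convex_on_cmul[of "- c" S "\<lambda>x. - f x"] by (simp add: concave_on_def)

lemma concave_on_cmul_nonpos:
  fixes c :: real
  assumes "c \<le> 0" and "convex_on S f"
  shows "concave_on S (\<lambda>x. c * f x)"
  using assms convex_on_cmul[of "- c" S f] by (simp add: concave_on_def)

lemma sign_concave_on_cmul:
  assumes "sign_concave_on S g"
  shows "sign_concave_on S (\<lambda>x. c * g x)"
proof (cases "0 \<le> c")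
  case True
  with assms show ?thesis
    by (auto simp: sign_concave_on_def mult_nonneg_nonpos)
next
  case False
  with assms show ?thesis
    by (auto simp: sign_concave_on_def mult_nonpos_nonpos mult_nonpos_nonneg
        convex_on_cmul_nonpos concave_on_cmul_nonpos)
qed

lemma concave_on_if_sign_concave_on_nonneg:
  assumes "sign_concave_on S g" and "\<forall>x\<in>S. 0 \<le> g x"
  shows "concave_on S g"
proof (cases "concave_on S g")
  case False
  with assms have "convex_on S g" and "\<forall>x\<in>S. g x = 0"
    by (auto simp: sign_concave_on_def intro: order_antisym)
  then show ?thesis
    by (auto simp: concave_on_iff convex_on_def convex_def)
qed

lemma convex_between_graphs:
  assumes "convex_on S f" and "concave_on S h"
  shows "convex {(x, y). x \<in> S \<and> f x \<le> y \<and> y \<le> h x}"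
proof -
  let ?flip = "\<lambda>z :: 'a \<times> real. (fst z, - snd z)"
  have "{(x, y). x \<in> S \<and> f x \<le> y \<and> y \<le> h x}
      = epigraph S f \<inter> ?flip -` epigraph S (\<lambda>x. - h x)"
    by (auto simp: epigraph_def)
  moreover have "linear ?flip"
    by (intro linearI) auto
  ultimately show ?thesis
    using assms by (simp add: convex_Int convex_epigraph convex_linear_vimage concave_on_def)
qed

lemma convex_Zi:
  assumes "sign_concave_on S (\<lambda>x. \<beta> * g x)" and "ul \<le> 0" and "0 \<le> uu"
  shows "convex (Zi S g \<beta> al b0 ul uu)"
proof -
  obtain lo hi where bounds: "convex_on S lo" "concave_on S hi"
    and Ui: "\<And>x. Ui S g \<beta> ul uu x = {lo x..hi x}"
  proof (cases "\<forall>x\<in>S. 0 \<le> \<beta> * g x")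
    case True
    have "concave_on S (\<lambda>x. \<beta> * g x)"
      using assms(1) True by (rule concave_on_if_sign_concave_on_nonneg)
    then show ?thesis
      using that[of "\<lambda>x. ul * (\<beta> * g x)" "\<lambda>x. uu * (\<beta> * g x)"] True assms(2,3)
      by (simp add: Ui_def convex_on_cmul_nonpos concave_on_cmul mult.commute)
  next
    case False
    then have "convex_on S (\<lambda>x. \<beta> * g x)"
      using assms(1) by (auto simp: sign_concave_on_def)
    then show ?thesis
      using that[of "\<lambda>x. uu * (\<beta> * g x)" "\<lambda>x. ul * (\<beta> * g x)"] False assms(2,3)
      by (simp add: Ui_def concave_on_cmul_nonpos convex_on_cmul mult.commute)
  qed
  let ?shear = "\<lambda>z. (fst z, b0 * snd z - al \<bullet> fst z)"
  have "linear ?shear"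
    by (intro linearI) (auto simp: algebra_simps inner_add_right)
  then have "convex (?shear -` {(x, y). x \<in> S \<and> lo x \<le> y \<and> y \<le> hi x})"
    using convex_between_graphs[OF bounds] by (rule convex_linear_vimage)
  moreover have "Zi S g \<beta> al b0 ul uu = ?shear -` {(x, y). x \<in> S \<and> lo x \<le> y \<and> y \<le> hi x}"
    by (auto simp: Zi_def Ui)
  ultimately show ?thesis
    by simp
qed

lemma mem_closed_segment_mult_iff:
  fixes c a b y :: real
  assumes "c \<noteq> 0"
  shows "y \<in> closed_segment (c * a) (c * b) \<longleftrightarrow> y / c \<in> closed_segment a b"
proof -
  have "closed_segment (c * a) (c * b) = (*) c ` closed_segment a b"
    by (intro closed_segment_linear_image linearI) (auto simp: algebra_simps)
  also have "y \<in> \<dots> \<longleftrightarrow> y / c \<in> closed_segment a b"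
    using assms by (auto simp: image_iff intro!: bexI[where x = "y / c"])
  finally show ?thesis .
qed

lemma Ui_eq_closed_segment:
  assumes "x \<in> S" and "sign_concave_on S (\<lambda>x. \<beta> * g x)" and "ul \<le> uu"
  shows "Ui S g \<beta> ul uu x = closed_segment (\<beta> * g x * ul) (\<beta> * g x * uu)"
proof -
  consider "0 < \<beta> * g x" | "\<beta> * g x = 0" | "\<beta> * g x < 0"
    by linarith
  then show ?thesis
  proof cases
    case 1
    then have "\<forall>y\<in>S. 0 \<le> \<beta> * g y"
      using assms(1,2) by (auto simp: sign_concave_on_def)
    moreover have "\<beta> * g x * ul \<le> \<beta> * g x * uu"
      using 1 assms(3) by (simp add: mult_left_mono)
    ultimately show ?thesis
      by (simp add: Ui_def closed_segment_eq_real_ivl1)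
  next
    case 3
    then have "\<not> (\<forall>y\<in>S. 0 \<le> \<beta> * g y)"
      using assms(1) by force
    then have "Ui S g \<beta> ul uu x = {\<beta> * g x * uu..\<beta> * g x * ul}"
      unfolding Ui_def by (rule if_not_P)
    moreover have "\<beta> * g x * uu \<le> \<beta> * g x * ul"
      using 3 assms(3) by (simp add: mult_left_mono_neg)
    ultimately show ?thesis
      by (simp add: closed_segment_commute[of "\<beta> * g x * ul"] closed_segment_eq_real_ivl1)
  qed (auto simp: Ui_def)
qed

lemma mem_Zi_iff:
  assumes "x \<in> S" and "sign_concave_on S (\<lambda>x. \<beta> * g x)"
    and "\<beta> \<noteq> 0" and "b0 \<noteq> 0" and "ul \<le> uu"
  shows "(x, v) \<in> Zi S g \<beta> al b0 ul uu \<longleftrightarrow>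
    (if g x \<noteq> 0 then Psi g \<beta> al b0 x v \<in> {ul..uu} else v = al \<bullet> x / b0)"
proof (cases "g x = 0")
  case True
  with assms show ?thesis
    by (auto simp: Zi_def Ui_eq_closed_segment field_simps)
next
  case False
  then have "b0 * v - al \<bullet> x \<in> closed_segment (\<beta> * g x * ul) (\<beta> * g x * uu)
      \<longleftrightarrow> Psi g \<beta> al b0 x v \<in> {ul..uu}"
    using assms(3,5)
    by (simp add: Psi_def mem_closed_segment_mult_iff closed_segment_eq_real_ivl1)
  with False assms show ?thesis
    by (simp add: Zi_def Ui_eq_closed_segment)
qed

lemma mem_Zset_iff:
  "(x, v) \<in> Zset X g \<beta> al b0 U \<longleftrightarrow>
    x \<in> X \<and> (if g x \<noteq> 0 then Psi g \<beta> al b0 x v \<in> U else v = al \<bullet> x / b0)"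
  by (auto simp: Zset_def Xcirc_def)

lemma Zset_UN_eq_UN_Zi:
  assumes "\<forall>i\<in>I. sign_concave_on (X i) (\<lambda>x. \<beta> * g x)"
    and "\<beta> \<noteq> 0" and "b0 \<noteq> 0" and "ul \<le> uu"
  shows "Zset (\<Union>i\<in>I. X i) g \<beta> al b0 {ul..uu} = (\<Union>i\<in>I. Zi (X i) g \<beta> al b0 ul uu)"
proof -
  have "(x, v) \<in> Zi (X i) g \<beta> al b0 ul uu \<longleftrightarrow> x \<in> X i \<and>
      (if g x \<noteq> 0 then Psi g \<beta> al b0 x v \<in> {ul..uu} else v = al \<bullet> x / b0)"
    if "i \<in> I" for i x v
  proof (cases "x \<in> X i")
    case True
    with mem_Zi_iff[OF True] assms that show ?thesis
      by simp
  qed (simp add: Zi_def)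
  then show ?thesis
    by (auto simp: mem_Zset_iff)
qed

theorem theorem1:
  fixes A :: "real^'n^'n" and b c :: "real^'n" and g :: "real^'n \<Rightarrow> real"
    and Xs :: "nat \<Rightarrow> (real^'n) set" and s :: nat
    and ul uu b0 :: real and a :: "nat \<Rightarrow> real"
  assumes ctrl: "controllable A b"
    and g0: "g 0 \<noteq> 0"
    and s1: "1 \<le> s"
    and Xconv: "\<forall>i\<in>{1..s}. convex (Xs i)"
    and Xg: "\<forall>i\<in>{1..s}. ((\<forall>x\<in>Xs i. g x \<ge> 0) \<and> concave_on (Xs i) g)
                       \<or> ((\<forall>x\<in>Xs i. g x \<le> 0) \<and> convex_on (Xs i) g)"
    and X1: "0 \<in> interior (Xs 1)"
    and U: "ul < 0" "0 < uu"
    and c1: "\<forall>i < CARD('n) - 1. c \<bullet> (mat_pow A i *v b) = 0"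
    and c2: "c \<bullet> (mat_pow A (CARD('n) - 1) *v b) \<noteq> 0"
    and b0: "b0 \<noteq> 0"
  shows "(\<forall>i\<in>{1..s}. convex (Zi (Xs i) g (c \<bullet> (mat_pow A (CARD('n) - 1) *v b))
                          (alpha_vec A c a) b0 ul uu))
    \<and> Zset (\<Union>i\<in>{1..s}. Xs i) g (c \<bullet> (mat_pow A (CARD('n) - 1) *v b)) (alpha_vec A c a) b0 {ul..uu}
      = (\<Union>i\<in>{1..s}. Zi (Xs i) g (c \<bullet> (mat_pow A (CARD('n) - 1) *v b)) (alpha_vec A c a) b0 ul uu)"
proof -
  \<comment> \<open>Controllability, g 0 \<noteq> 0, 0 \<in> interior (Xs 1) and the relative-degree conditions c1
    are what make \<Psi> an exact linearization; the set identity itself only needs \<beta> \<noteq> 0.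
    Xconv is implied by Xg, as convex_on and concave_on include convexity of the domain.\<close>
  define \<beta> where "\<beta> = c \<bullet> (mat_pow A (CARD('n) - 1) *v b)"
  have "\<beta> \<noteq> 0"
    using c2 by (simp add: \<beta>_def)
  have pieces: "\<forall>i\<in>{1..s}. sign_concave_on (Xs i) (\<lambda>x. \<beta> * g x)"
    using Xg sign_concave_on_cmul unfolding sign_concave_on_def by blast
  have "\<forall>i\<in>{1..s}. convex (Zi (Xs i) g \<beta> (alpha_vec A c a) b0 ul uu)"
    using pieces U by (simp add: convex_Zi)
  moreover have "Zset (\<Union>i\<in>{1..s}. Xs i) g \<beta> (alpha_vec A c a) b0 {ul..uu}
      = (\<Union>i\<in>{1..s}. Zi (Xs i) g \<beta> (alpha_vec A c a) b0 ul uu)"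
    using pieces \<open>\<beta> \<noteq> 0\<close> b0 U by (simp add: Zset_UN_eq_UN_Zi)
  ultimately show ?thesis
    unfolding \<beta>_def by blast
qed

end
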